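(* Let $\boldsymbol{u}^\star\in\mathbb{R}^n$ and $f(\boldsymbol{u})=\frac12\|\boldsymbol{u}\boldsymbol{u}^{\mathrm T}-\boldsymbol{u}^\star{\boldsymbol{u}^\star}^{\mathrm T}\|_1$ on $\mathbb{R}^n$. For any spurious stationary point $\boldsymbol{u}$ of $f$ and for $\boldsymbol{w}=\boldsymbol{u}^\star-\boldsymbol{u}$ as well as for $\boldsymbol{w}=-\boldsymbol{u}^\star-\boldsymbol{u}$, one has $df(\boldsymbol{u})(\boldsymbol{w})=0$.
   Context: $\|\cdot\|_1$ is the entrywise $\ell_1$-norm. $df(\boldsymbol{x})(\boldsymbol{w})=\lim_{t\searrow0}(f(\boldsymbol{x}+t\boldsymbol{w})-f(\boldsymbol{x}))/t$. A point $\boldsymbol{u}$ is stationary if $\boldsymbol{0}\in\partial f(\boldsymbol{u})$, where $\partial f(\boldsymbol{u})=\{\boldsymbol{Z}\boldsymbol{u}:\boldsymbol{Z}\text{ symmetric}, \boldsymbol{Z}\in\operatorname{Sign}(\boldsymbol{u}\boldsymbol{u}^{\mathrm T}-\boldsymbol{u}^\star{\boldsymbol{u}^\star}^{\mathrm T})\}$ (entrywise set-valued sign, $\operatorname{Sign}(0)=[-1,1]$) is the (Fréchet = limiting = Clarke) subdifferential; it is spurious if additionally $\boldsymbol{u}\notin\{\boldsymbol{u}^\star,-\boldsymbol{u}^\star\}$. *)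

theory Defs
  imports "HOL-Analysis.Analysis"
begin

definition lrobj :: "real^'n \<Rightarrow> real^'n \<Rightarrow> real" where
  "lrobj us u = (1/2) * (\<Sum>i\<in>UNIV. \<Sum>j\<in>UNIV. \<bar>u$i * u$j - us$i * us$j\<bar>)"

definition Sign :: "real \<Rightarrow> real set" where
  "Sign x = (if x = 0 then {-1..1} else {sgn x})"

definition subdiff :: "real^'n \<Rightarrow> real^'n \<Rightarrow> (real^'n) set" where
  "subdiff us u = {Z *v u | Z :: real^'n^'n. transpose Z = Z \<and>
      (\<forall>i j. Z$i$j \<in> Sign (u$i * u$j - us$i * us$j))}"

definition stationary :: "real^'n \<Rightarrow> real^'n \<Rightarrow> bool" where
  "stationary us u \<longleftrightarrow> 0 \<in> subdiff us u"

definition spurious_stationary :: "real^'n \<Rightarrow> real^'n \<Rightarrow> bool" where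
  "spurious_stationary us u \<longleftrightarrow> stationary us u \<and> u \<noteq> us \<and> u \<noteq> - us"

definition has_dir_deriv :: "(real^'n \<Rightarrow> real) \<Rightarrow> real^'n \<Rightarrow> real^'n \<Rightarrow> real \<Rightarrow> bool" where
  "has_dir_deriv f x w d \<longleftrightarrow> ((\<lambda>t. (f (x + t *\<^sub>R w) - f x) / t) \<longlongrightarrow> d) (at_right 0)"

end

theory Submission
  imports Defs
begin

(*
  Write D_ij = u_i u_j - us_i us_j and a_ij = u_i w_j + w_i u_j. The one-sided derivative of f
  at u in direction w is half the sum of sgn(D_ij) a_ij over the entries with D_ij ~= 0 and of
  |a_ij| over those with D_ij = 0. A symmetric stationarity certificate Z has
  sum Z_ij a_ij = 2 w^T Z u = 0, so the derivative vanishes as soon as Z_ij a_ij = |a_ij|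
  wherever D_ij = 0.

  Flipping the signs of coordinates we may assume us >= 0. Comparing rows of Z u = 0 then shows
  that u vanishes where us does, that D_ij = 0 with u_i, u_j ~= 0 forces
  (u_i, u_j) = +-(us_i, us_j), and that Z_ij = -1 whenever u ~= -us agrees with -us on two
  coordinates where us > 0. Hence for w = us - u either a_ij = 0 or Z_ij a_ij = |a_ij| wherever
  D_ij = 0. The direction -us - u is the same statement at the stationary point -u, as f is even.
*)

lemma Sign_nonzero [simp]: "x \<noteq> 0 \<Longrightarrow> Sign x = {sgn x}"
  by (simp add: Sign_def)

lemma abs_le_one_if_Sign: "z \<in> Sign x \<Longrightarrow> \<bar>z\<bar> \<le> 1"
  by (cases "x = 0") (auto simp: Sign_def sgn_real_def)

lemma Sign_mult_pos: "0 < c \<Longrightarrow> Sign (c * x) = Sign x"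
  by (simp add: Sign_def sgn_mult)

lemma mult_Sign: "\<bar>e\<bar> = 1 \<Longrightarrow> z \<in> Sign x \<Longrightarrow> e * z \<in> Sign (e * x)"
  by (cases "x = 0") (auto simp: Sign_def sgn_mult abs_if sgn_real_def split: if_splits)

lemma Sign_mono: "z \<in> Sign x \<Longrightarrow> z' \<in> Sign y \<Longrightarrow> 0 \<le> (z' - z) * (y - x)"
  by (auto simp: Sign_def sgn_real_def zero_le_mult_iff split: if_splits)

lemma Sign_opposite_signs: "z \<in> Sign x \<Longrightarrow> z' \<in> Sign y \<Longrightarrow> x * y < 0 \<Longrightarrow> z \<noteq> z'"
  by (auto simp: mult_less_0_iff sgn_real_def)

definition abs_dir_deriv :: "real \<Rightarrow> real \<Rightarrow> real" where
  "abs_dir_deriv x h = (if x = 0 then \<bar>h\<bar> else sgn x * h)"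

lemma abs_dir_deriv_quadratic:
  fixes x h k :: real
  shows "((\<lambda>t. (\<bar>x + t * h + t\<^sup>2 * k\<bar> - \<bar>x\<bar>) / t) \<longlongrightarrow> abs_dir_deriv x h) (at_right 0)"
proof (cases "x = 0")
  case True
  have "((\<lambda>t. \<bar>h + t * k\<bar>) \<longlongrightarrow> \<bar>h + 0 * k\<bar>) (at_right 0)"
    by (intro tendsto_intros)
  moreover have "\<forall>\<^sub>F t in at_right 0. \<bar>h + t * k\<bar> = (\<bar>x + t * h + t\<^sup>2 * k\<bar> - \<bar>x\<bar>) / t"
    using eventually_at_right_less[of "0::real"]
  proof eventually_elim
    case (elim t)
    have "x + t * h + t\<^sup>2 * k = t * (h + t * k)"
      using True by (simp add: power2_eq_square algebra_simps)
    then show ?case using True elim by (simp add: abs_mult)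
  qed
  ultimately show ?thesis
    using True by (simp add: abs_dir_deriv_def Lim_transform_eventually)
next
  case False
  have "((\<lambda>t. t * h + t\<^sup>2 * k) \<longlongrightarrow> 0 * h + 0\<^sup>2 * k) (at_right (0::real))"
    by (intro tendsto_intros)
  then have "((\<lambda>t. \<bar>t * h + t\<^sup>2 * k\<bar>) \<longlongrightarrow> 0) (at_right 0)"
    by (intro tendsto_rabs_zero) simp
  then have "\<forall>\<^sub>F t in at_right 0. \<bar>t * h + t\<^sup>2 * k\<bar> < \<bar>x\<bar>"
    by (rule order_tendstoD(2)) (use False in simp)
  then have "\<forall>\<^sub>F t in at_right 0. sgn x * (h + t * k) = (\<bar>x + t * h + t\<^sup>2 * k\<bar> - \<bar>x\<bar>) / t"
    using eventually_at_right_less[of "0::real"]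
  proof eventually_elim
    case (elim t)
    then have "\<bar>x + (t * h + t\<^sup>2 * k)\<bar> - \<bar>x\<bar> = sgn x * (t * h + t\<^sup>2 * k)"
      by (cases "x > 0") (auto simp: abs_if)
    then show ?case using elim by (simp add: power2_eq_square field_simps)
  qed
  moreover have "((\<lambda>t. sgn x * (h + t * k)) \<longlongrightarrow> sgn x * (h + 0 * k)) (at_right 0)"
    by (intro tendsto_intros)
  ultimately show ?thesis
    using False by (simp add: abs_dir_deriv_def Lim_transform_eventually)
qed

lemma has_dir_deriv_lrobj:
  fixes us u w :: "real^'n"
  shows "has_dir_deriv (lrobj us) u w
    ((1/2) * (\<Sum>i\<in>UNIV. \<Sum>j\<in>UNIV. abs_dir_deriv (u$i * u$j - us$i * us$j) (u$i * w$j + w$i * u$j)))"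
proof -
  define D where "D i j = u$i * u$j - us$i * us$j" for i j
  define a where "a i j = u$i * w$j + w$i * u$j" for i j
  have diff_quotient: "(lrobj us (u + t *\<^sub>R w) - lrobj us u) / t
      = (1/2) * (\<Sum>i\<in>UNIV. \<Sum>j\<in>UNIV. (\<bar>D i j + t * a i j + t\<^sup>2 * (w$i * w$j)\<bar> - \<bar>D i j\<bar>) / t)" for t
    by (simp add: lrobj_def D_def a_def sum_subtractf flip: sum_divide_distrib)
       (simp add: power2_eq_square algebra_simps diff_divide_distrib)
  have "((\<lambda>t. (1/2) * (\<Sum>i\<in>UNIV. \<Sum>j\<in>UNIV. (\<bar>D i j + t * a i j + t\<^sup>2 * (w$i * w$j)\<bar> - \<bar>D i j\<bar>) / t))
      \<longlongrightarrow> (1/2) * (\<Sum>i\<in>UNIV. \<Sum>j\<in>UNIV. abs_dir_deriv (D i j) (a i j))) (at_right 0)"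
    by (intro tendsto_intros abs_dir_deriv_quadratic)
  then show ?thesis
    unfolding has_dir_deriv_def diff_quotient D_def a_def .
qed

lemma has_dir_deriv_lrobj_eq_0:
  fixes us u w :: "real^'n" and Z :: "real^'n^'n"
  assumes "transpose Z = Z" and "Z *v u = 0"
    and Sign_entry: "\<And>i j. Z$i$j \<in> Sign (u$i * u$j - us$i * us$j)"
    and zero_set: "\<And>i j. u$i * u$j = us$i * us$j \<Longrightarrow>
      Z$i$j * (u$i * w$j + w$i * u$j) = \<bar>u$i * w$j + w$i * u$j\<bar>"
  shows "has_dir_deriv (lrobj us) u w 0"
proof -
  have entry: "abs_dir_deriv (u$i * u$j - us$i * us$j) (u$i * w$j + w$i * u$j)
      = Z$i$j * (u$i * w$j + w$i * u$j)" for i j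
    using zero_set[of i j] Sign_entry[of i j] by (auto simp: abs_dir_deriv_def)
  have row: "(\<Sum>j\<in>UNIV. Z$i$j * u$j) = 0" for i
    using \<open>Z *v u = 0\<close> by (simp add: vec_eq_iff matrix_vector_mult_def)
  have Z_sym: "Z$j$i = Z$i$j" for i j
    using \<open>transpose Z = Z\<close> by (metis transpose_def vec_lambda_beta)
  have "(\<Sum>i\<in>UNIV. \<Sum>j\<in>UNIV. Z$i$j * (w$i * u$j)) = (\<Sum>i\<in>UNIV. w$i * (\<Sum>j\<in>UNIV. Z$i$j * u$j))"
    by (simp add: sum_distrib_left algebra_simps)
  also have "\<dots> = 0"
    by (simp add: row)
  finally have "(\<Sum>i\<in>UNIV. \<Sum>j\<in>UNIV. Z$i$j * (w$i * u$j)) = 0" .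
  moreover have "(\<Sum>i\<in>UNIV. \<Sum>j\<in>UNIV. Z$i$j * (u$i * w$j)) = (\<Sum>i\<in>UNIV. \<Sum>j\<in>UNIV. Z$i$j * (w$i * u$j))"
    by (subst sum.swap) (simp add: Z_sym mult.commute)
  ultimately show ?thesis
    using has_dir_deriv_lrobj[of us u w] by (simp add: entry distrib_left sum.distrib)
qed

lemma has_dir_deriv_linear_image:
  assumes "linear L" and "\<And>y. g (L y) = f y" and "has_dir_deriv f x w d"
  shows "has_dir_deriv g (L x) (L w) d"
proof -
  have "g (L x + t *\<^sub>R L w) - g (L x) = f (x + t *\<^sub>R w) - f x" for t
    using assms(1,2) by (metis linear_add linear_scale)
  then show ?thesis
    using assms(3) by (simp add: has_dir_deriv_def)
qed

lemma stationary_uminus: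
  fixes us u :: "real^'n"
  assumes "stationary us u"
  shows "stationary us (- u)"
proof -
  obtain Z :: "real^'n^'n" where "transpose Z = Z" "Z *v u = 0"
    and "\<And>i j. Z$i$j \<in> Sign (u$i * u$j - us$i * us$j)"
    using assms by (auto simp: stationary_def subdiff_def)
  moreover have "Z *v (- u) = - (Z *v u)"
    by (simp add: vec_eq_iff matrix_vector_mult_def sum_negf)
  ultimately show ?thesis
    by (auto simp: stationary_def subdiff_def intro!: exI[of _ Z])
qed

lemma stationary_mult_sign:
  fixes e us u :: "real^'n"
  assumes sign: "\<And>i. \<bar>e$i\<bar> = 1" and "stationary us u"
  shows "stationary (e * us) (e * u)"
proof -
  obtain Z :: "real^'n^'n" where symmetric: "transpose Z = Z" and kernel: "Z *v u = 0"
    and Sign_entry: "\<And>i j. Z$i$j \<in> Sign (u$i * u$j - us$i * us$j)"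
    using assms(2) by (auto simp: stationary_def subdiff_def)
  define Z' :: "real^'n^'n" where "Z' = (\<chi> i j. e$i * e$j * Z$i$j)"
  have "transpose Z' = Z'"
    using symmetric by (simp add: Z'_def transpose_def vec_eq_iff mult.commute)
  moreover have "Z'$i$j \<in> Sign ((e * u)$i * (e * u)$j - (e * us)$i * (e * us)$j)" for i j
    using mult_Sign[OF _ Sign_entry[of i j], of "e$i * e$j"] sign
    by (simp add: Z'_def abs_mult algebra_simps)
  moreover have "Z' *v (e * u) = 0"
  proof -
    have summand: "e$i * e$j * Z$i$j * (e$j * u$j) = e$i * (Z$i$j * u$j)" for i j
    proof -
      have "e$i * e$j * Z$i$j * (e$j * u$j) = e$i * (e$j * e$j) * (Z$i$j * u$j)"
        by (simp only: mult_ac)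
      also have "\<dots> = e$i * (Z$i$j * u$j)"
        using abs_mult_self_eq[of "e$j"] sign[of j] by simp
      finally show ?thesis .
    qed
    have "(Z' *v (e * u))$i = e$i * (Z *v u)$i" for i
      unfolding Z'_def matrix_vector_mult_def
      by (simp only: vec_lambda_beta vector_mult_component summand sum_distrib_left)
    then show ?thesis
      using kernel by (simp add: vec_eq_iff)
  qed
  ultimately show ?thesis
    by (auto simp: stationary_def subdiff_def intro!: exI[of _ Z'])
qed

lemma lrobj_uminus: "lrobj us (- x) = lrobj us x"
  by (simp add: lrobj_def)

lemma lrobj_mult_sign:
  fixes e us x :: "real^'n"
  assumes "\<And>i. \<bar>e$i\<bar> = 1"
  shows "lrobj (e * us) (e * x) = lrobj us x"
proof -
  have "(e * x)$i * (e * x)$j - (e * us)$i * (e * us)$j = (e$i * e$j) * (x$i * x$j - us$i * us$j)" for i j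
    by (simp add: algebra_simps)
  then show ?thesis
    using assms by (simp add: lrobj_def abs_mult)
qed

lemma diff_mult_diff_neg_if_mult_eq:
  fixes a b c d :: real
  assumes "a * b = c * d" and "0 < a" and "0 < d" and "a \<noteq> c"
  shows "(a - c) * (b - d) < 0"
proof -
  have "a * ((a - c) * (b - d)) = - (d * (a - c)\<^sup>2)"
    using assms(1) by (simp add: power2_eq_square algebra_simps)
  also have "\<dots> < 0"
    using assms(3,4) by simp
  finally show ?thesis
    using assms(2) by (simp add: mult_less_0_iff)
qed

(* A certificate of stationarity of u for a target p that has been made nonnegative
   by coordinate sign flips (see stationary_mult_sign). *)
locale stationary_certificate =
  fixes p u :: "real^'n" and Z :: "real^'n^'n"
  assumes symmetric: "transpose Z = Z"
    and Sign_entry: "\<And>i j. Z$i$j \<in> Sign (u$i * u$j - p$i * p$j)"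
    and kernel: "Z *v u = 0"
    and nonneg: "\<And>i. 0 \<le> p$i"
begin

lemma entry_sym: "Z$j$i = Z$i$j"
  using symmetric by (metis transpose_def vec_lambda_beta)

lemma row_sum_eq_0: "(\<Sum>j\<in>UNIV. Z$i$j * u$j) = 0"
  using kernel by (simp add: vec_eq_iff matrix_vector_mult_def)

lemma certificate_uminus: "stationary_certificate p (-u) Z"
  using symmetric Sign_entry kernel nonneg
  by unfold_locales (simp_all add: vec_eq_iff matrix_vector_mult_def sum_negf)

lemma eq_0_if_row_aligned:
  assumes "c \<noteq> 0" and "\<And>l. Z$k$l * u$l = c * \<bar>u$l\<bar>"
  shows "u = 0"
proof -
  have "c * (\<Sum>l\<in>UNIV. \<bar>u$l\<bar>) = 0"
    using row_sum_eq_0[of k] by (simp add: assms(2) sum_distrib_left)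
  then have "\<forall>l\<in>UNIV. \<bar>u$l\<bar> = 0"
    using \<open>c \<noteq> 0\<close> by (simp add: sum_nonneg_eq_0_iff)
  then show ?thesis
    by (simp add: vec_eq_iff)
qed

lemma zero_if_target_zero:
  assumes "p$k = 0"
  shows "u$k = 0"
proof (rule ccontr)
  assume "u$k \<noteq> 0"
  have "Z$k$l * u$l = sgn (u$k) * \<bar>u$l\<bar>" for l
  proof (cases "u$l = 0")
    case False
    then have "Z$k$l = sgn (u$k) * sgn (u$l)"
      using Sign_entry[of k l] \<open>u$k \<noteq> 0\<close> assms by (simp add: sgn_mult)
    then show ?thesis
      by (simp add: abs_sgn mult_ac)
  qed simp
  then have "u = 0"
    using \<open>u$k \<noteq> 0\<close> eq_0_if_row_aligned[of "sgn (u$k)" k] by (simp add: sgn_eq_0_iff)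
  then show False
    using \<open>u$k \<noteq> 0\<close> by simp
qed

lemma exists_below_target:
  assumes "u \<noteq> p"
  obtains j where "u$j < p$j"
proof (rule ccontr)
  assume "\<not> thesis"
  then have above: "p$j \<le> u$j" for j
    using that not_le by blast
  obtain k where "u$k \<noteq> p$k"
    using assms by (auto simp: vec_eq_iff)
  then have "p$k < u$k"
    using above[of k] by simp
  have "Z$k$l * u$l = 1 * \<bar>u$l\<bar>" for l
  proof (cases "u$l = 0")
    case False
    then have "0 < u$l"
      using above[of l] nonneg[of l] by simp
    have "p$k * p$l \<le> p$k * u$l"
      using above[of l] nonneg[of k] by (rule mult_left_mono)
    also have "\<dots> < u$k * u$l"
      using \<open>p$k < u$k\<close> \<open>0 < u$l\<close> by simp
    finally have "Z$k$l = 1"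
      using Sign_entry[of k l] by simp
    then show ?thesis
      using \<open>0 < u$l\<close> by simp
  qed simp
  then have "u = 0"
    using eq_0_if_row_aligned[of 1 k] by simp
  then show False
    using \<open>p$k < u$k\<close> nonneg[of k] by simp
qed

lemma square_eq_if_product_eq:
  assumes prod: "u$i * u$j = p$i * p$j" and "u$i \<noteq> 0" and "u$j \<noteq> 0"
  shows "u$i * u$i = p$i * p$i"
proof (rule ccontr)
  assume ne: "u$i * u$i \<noteq> p$i * p$i"
  have "0 < p$i" "0 < p$j"
    using assms zero_if_target_zero nonneg by (metis order_le_less)+
  (* Row i weighted by p_j minus row j weighted by p_i is termwise nonnegative by monotonicity
     of Sign, so all its terms vanish; this forces Z_ii = Z_jj although the diagonal entries
     of D have opposite signs. *)
  define K where "K = u$i * p$j - u$j * p$i"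
  have "K \<noteq> 0"
  proof
    assume "K = 0"
    then have "(u$i * u$i) * p$j = (u$i * u$j) * p$i"
      by (simp add: K_def mult.assoc)
    then have "(u$i * u$i) * p$j = (p$i * p$i) * p$j"
      using prod by (simp add: mult_ac)
    then show False
      using ne \<open>0 < p$j\<close> by simp
  qed
  have "0 \<le> (Z$i$k - Z$j$k) * (u$k * K)" for k
  proof -
    have "Z$j$k \<in> Sign (p$i * (u$j * u$k - p$j * p$k))"
      using Sign_entry \<open>0 < p$i\<close> by (simp add: Sign_mult_pos)
    moreover have "Z$i$k \<in> Sign (p$j * (u$i * u$k - p$i * p$k))"
      using Sign_entry \<open>0 < p$j\<close> by (simp add: Sign_mult_pos)
    ultimately have "0 \<le> (Z$i$k - Z$j$k) * (p$j * (u$i * u$k - p$i * p$k) - p$i * (u$j * u$k - p$j * p$k))"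
      by (rule Sign_mono)
    moreover have "p$j * (u$i * u$k - p$i * p$k) - p$i * (u$j * u$k - p$j * p$k) = u$k * K"
      by (simp add: K_def algebra_simps)
    ultimately show ?thesis
      by simp
  qed
  moreover have "(\<Sum>k\<in>UNIV. (Z$i$k - Z$j$k) * (u$k * K)) = 0"
    using row_sum_eq_0[of i] row_sum_eq_0[of j]
    by (simp add: left_diff_distrib sum_subtractf flip: sum_distrib_right mult.assoc)
  ultimately have "(Z$i$k - Z$j$k) * (u$k * K) = 0" for k
    by (simp add: sum_nonneg_eq_0_iff)
  from this[of i] this[of j] have "Z$i$i = Z$j$j"
    using \<open>K \<noteq> 0\<close> assms(2,3) entry_sym[of i j] by simp
  moreover have "(u$i * u$i - p$i * p$i) * (u$j * u$j - p$j * p$j) < 0"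
  proof (rule diff_mult_diff_neg_if_mult_eq)
    have "(u$i * u$i) * (u$j * u$j) = (u$i * u$j) * (u$i * u$j)"
      by (simp add: mult_ac)
    then show "(u$i * u$i) * (u$j * u$j) = (p$i * p$i) * (p$j * p$j)"
      using prod by (simp add: mult_ac)
    show "0 < u$i * u$i"
      using assms(2) not_real_square_gt_zero by blast
    show "0 < p$j * p$j"
      using \<open>0 < p$j\<close> by simp
  qed (fact ne)
  ultimately show False
    using Sign_opposite_signs[OF Sign_entry[of i i] Sign_entry[of j j]] by simp
qed

lemma entry_eq_minus_one:
  assumes "u \<noteq> p" and "u$i = p$i" and "u$m = p$m" and "0 < p$i" and "0 < p$m"
  shows "Z$i$m = -1"
proof -
  (* The difference of row i and a row j with u_j < p_j is termwise nonnegative, and its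
     m-th term is (Z_im + 1) p_m. *)
  obtain j where "u$j < p$j"
    using exists_below_target assms(1) by blast
  have row_i: "Z$i$k \<in> Sign (u$k - p$k)" for k
    using Sign_entry[of i k] assms(2,4) Sign_mult_pos[of "p$i" "u$k - p$k"]
    by (simp add: algebra_simps)
  have row_j: "Z$j$k = -1" if "0 < u$k" and "u$k \<le> p$k" for k
  proof -
    have "u$j * u$k < p$j * u$k"
      using \<open>u$j < p$j\<close> that(1) by simp
    also have "\<dots> \<le> p$j * p$k"
      using that(2) nonneg[of j] by (rule mult_left_mono)
    finally show ?thesis
      using Sign_entry[of j k] by simp
  qed
  have "0 \<le> (Z$i$k - Z$j$k) * u$k" for k
  proof -
    have "\<bar>Z$i$k\<bar> \<le> 1" "\<bar>Z$j$k\<bar> \<le> 1"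
      using abs_le_one_if_Sign Sign_entry by blast+
    consider "p$k < u$k" | "0 < u$k" "u$k \<le> p$k" | "u$k \<le> 0"
      by linarith
    then show ?thesis
    proof cases
      case 1
      then have "Z$i$k = 1" "0 < u$k"
        using row_i[of k] nonneg[of k] by simp_all
      then show ?thesis
        using \<open>\<bar>Z$j$k\<bar> \<le> 1\<close> by simp
    next
      case 2
      then show ?thesis
        using row_j[of k] \<open>\<bar>Z$i$k\<bar> \<le> 1\<close> by simp
    next
      case 3
      then consider "u$k = 0" | "u$k < p$k" "u$k < 0"
        using nonneg[of k] by linarith
      then show ?thesis
      proof cases
        case 2
        then have "Z$i$k = -1"
          using row_i[of k] by simp
        then show ?thesis
          using 2 \<open>\<bar>Z$j$k\<bar> \<le> 1\<close> by (simp add: mult_nonpos_nonpos)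
      qed simp
    qed
  qed
  moreover have "(\<Sum>k\<in>UNIV. (Z$i$k - Z$j$k) * u$k) = 0"
    using row_sum_eq_0[of i] row_sum_eq_0[of j] by (simp add: left_diff_distrib sum_subtractf)
  ultimately have "(Z$i$m - Z$j$m) * u$m = 0"
    by (simp add: sum_nonneg_eq_0_iff)
  then show ?thesis
    using row_j[of m] assms(3,5) by simp
qed

lemma has_dir_deriv_toward_target:
  assumes "u \<noteq> -p"
  shows "has_dir_deriv (lrobj p) u (p - u) 0"
proof (rule has_dir_deriv_lrobj_eq_0[OF symmetric kernel Sign_entry])
  fix i j
  assume prod: "u$i * u$j = p$i * p$j"
  show "Z$i$j * (u$i * (p - u)$j + (p - u)$i * u$j) = \<bar>u$i * (p - u)$j + (p - u)$i * u$j\<bar>"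
  proof (cases "u$i = 0 \<or> u$j = 0")
    case True
    then have "u$i * p$j = 0" and "p$i * u$j = 0"
      using prod zero_if_target_zero by auto
    then show ?thesis
      using True by (auto simp: algebra_simps)
  next
    case False
    then have "0 < p$i" "0 < p$j"
      using zero_if_target_zero nonneg by (metis order_le_less)+
    moreover have "u$i = p$i \<or> u$i = - p$i"
      using square_eq_if_product_eq[OF prod] False by (simp add: square_eq_iff)
    moreover have "u$j = p$j \<or> u$j = - p$j"
      using square_eq_if_product_eq[of j i] prod False by (simp add: square_eq_iff mult.commute)
    ultimately consider "u$i = p$i" "u$j = p$j" | "u$i = - p$i" "u$j = - p$j"
      using prod by auto
    then show ?thesis
    proof cases
      case 2
      have "- u \<noteq> p"
        using assms by auto
      then have "Z$i$j = -1"
        using stationary_certificate.entry_eq_minus_one[OF certificate_uminus] 2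
          \<open>0 < p$i\<close> \<open>0 < p$j\<close> by simp
      then show ?thesis
        using 2 \<open>0 < p$i\<close> \<open>0 < p$j\<close> by simp
    qed simp
  qed
qed

end

lemma stationary_has_dir_deriv_toward_target:
  fixes us u :: "real^'n"
  assumes "stationary us u" and "u \<noteq> - us"
  shows "has_dir_deriv (lrobj us) u (us - u) 0"
proof -
  define e :: "real^'n" where "e = (\<chi> i. if us$i < 0 then -1 else 1)"
  have sign: "\<bar>e$i\<bar> = 1" for i
    by (simp add: e_def)
  have e_e: "e * (e * x) = x" for x :: "real^'n"
    by (simp add: e_def vec_eq_iff)
  obtain Z :: "real^'n^'n" where "transpose Z = Z" and "Z *v (e * u) = 0"
    and "\<And>i j. Z$i$j \<in> Sign ((e * u)$i * (e * u)$j - (e * us)$i * (e * us)$j)"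
    using stationary_mult_sign[OF sign assms(1)] by (auto simp: stationary_def subdiff_def)
  then have "stationary_certificate (e * us) (e * u) Z"
    by unfold_locales (simp_all add: e_def)
  moreover have "e * u \<noteq> - (e * us)"
  proof
    assume "e * u = - (e * us)"
    then have "e * (e * u) = - (e * (e * us))"
      by (simp add: vec_eq_iff)
    then show False
      using assms(2) e_e by simp
  qed
  ultimately have "has_dir_deriv (lrobj (e * us)) (e * u) (e * us - e * u) 0"
    by (rule stationary_certificate.has_dir_deriv_toward_target)
  then have "has_dir_deriv (lrobj us) (e * (e * u)) (e * (e * us - e * u)) 0"
  proof (rule has_dir_deriv_linear_image[rotated 2])
    show "linear ((*) e)"
      by (intro linearI) (simp_all add: vec_eq_iff algebra_simps)
    show "lrobj us (e * y) = lrobj (e * us) y" for y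
      using lrobj_mult_sign[OF sign, of us "e * y"] e_e by simp
  qed
  then show ?thesis
    by (simp add: e_e right_diff_distrib)
qed

theorem lemma2:
  fixes us u :: "real^'n"
  assumes "spurious_stationary us u"
  shows "has_dir_deriv (lrobj us) u (us - u) 0 \<and> has_dir_deriv (lrobj us) u (- us - u) 0"
proof
  have stat: "stationary us u" and "u \<noteq> us" and "u \<noteq> - us"
    using assms by (simp_all add: spurious_stationary_def)
  show "has_dir_deriv (lrobj us) u (us - u) 0"
    using stat \<open>u \<noteq> - us\<close> by (rule stationary_has_dir_deriv_toward_target)
  have "has_dir_deriv (lrobj us) (- u) (us - - u) 0"
    using stationary_uminus[OF stat] \<open>u \<noteq> us\<close> by (intro stationary_has_dir_deriv_toward_target) auto
  then have "has_dir_deriv (lrobj us) (- (- u)) (- (us - - u)) 0"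
  proof (rule has_dir_deriv_linear_image[rotated 2])
    show "linear (uminus :: real^'n \<Rightarrow> real^'n)"
      by (intro linearI) simp_all
  qed (rule lrobj_uminus)
  then show "has_dir_deriv (lrobj us) u (- us - u) 0"
    by simp
qed

end
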